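(* Let $m$ be an integer and $n>0$ an integer. (1) The ordered root quadruples $\mathbf v=(w,x,y,z)$, $w\le x\le y\le z$, with $L(\mathbf v)>0$, $Q_{\mathcal D}(\mathbf v)=4m$ and smallest element $w=-n$ are in one-to-one correspondence with the integral binary quadratic forms $[A,B,C]=AX^2+2BXY+CY^2$ (primitive or imprimitive) of discriminant $\Delta=4B^2-4AC=-4n^2+4m$ satisfying $0\le 2B\le A\le C$; the correspondence is given by $$[A,B,C]=\left[-n+x,\ \tfrac12(-n+x+y-z),\ -n+y\right].$$ (2) If $\Delta=-4n^2+4m<0$, then $N_{\mathrm{root}}(4m;-n)=\widetilde{h^{\pm}}(-4(n^2-m))$.
   Context: $Q_{\mathcal D}(a,b,c,d)=2(a^2+b^2+c^2+d^2)-(a+b+c+d)^2$; $L(\mathbf v)=a+b+c+d$; $|\mathbf v|=|a|+|b|+|c|+|d|$. $\mathbf S_i$ ($i=1,\dots,4$) is the integer matrix replacing the $i$-th coordinate $a_i$ of a quadruple by $2\sum_{j\ne i}a_j-a_i$, other coordinates fixed. An integer quadruple is reduced if no $\mathbf S_i$ strictly decreases $|\cdot|$; a reduced quadruple ordered as $a\le b\le c\le d$ with $L\ge0$ is a root quadruple if $a+b+c\ge d>0$. $N_{\mathrm{root}}(k;-n)$ is the number of integer root quadruples $(w,x,y,z)$ with $Q_{\mathcal D}=k$, $w+x+y+z>0$ and smallest element $w=-n$. For a discriminant $\Delta<0$, $\widetilde{h^{\pm}}(\Delta)$ is the number of integral binary quadratic forms $[A,B,C]=AT^2+2BTU+CU^2$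 (primitive or imprimitive) with $4B^2-4AC=\Delta$ and $0\le2B\le A\le C$ (the $GL(2,\mathbb Z)$-reduced forms; equivalently the number of $GL(2,\mathbb Z)$-equivalence classes of positive definite forms of discriminant $\Delta$). *)

theory Defs
  imports Main
begin

type_synonym quad = "int \<times> int \<times> int \<times> int"

definition QD :: "quad \<Rightarrow> int" where
  "QD v = (case v of (a,b,c,d) \<Rightarrow> 2*(a^2+b^2+c^2+d^2) - (a+b+c+d)^2)"

definition Lq :: "quad \<Rightarrow> int" where
  "Lq v = (case v of (a,b,c,d) \<Rightarrow> a+b+c+d)"

definition normq :: "quad \<Rightarrow> int" where
  "normq v = (case v of (a,b,c,d) \<Rightarrow> \<bar>a\<bar>+\<bar>b\<bar>+\<bar>c\<bar>+\<bar>d\<bar>)"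

definition Sq :: "nat \<Rightarrow> quad \<Rightarrow> quad" where
  "Sq i v = (case v of (a,b,c,d) \<Rightarrow>
     if i = 1 then (2*(b+c+d) - a, b, c, d)
     else if i = 2 then (a, 2*(a+c+d) - b, c, d)
     else if i = 3 then (a, b, 2*(a+b+d) - c, d)
     else (a, b, c, 2*(a+b+c) - d))"

definition reduced :: "quad \<Rightarrow> bool" where
  "reduced v \<longleftrightarrow> (\<forall>i\<in>{1..4}. \<not> normq (Sq i v) < normq v)"

definition root_quad :: "quad \<Rightarrow> bool" where
  "root_quad v \<longleftrightarrow> reduced v \<and> (case v of (a,b,c,d) \<Rightarrow>
      a \<le> b \<and> b \<le> c \<and> c \<le> d \<and> a+b+c+d \<ge> 0 \<and> a+b+c \<ge> d \<and> d > 0)"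

definition N_root :: "int \<Rightarrow> int \<Rightarrow> nat" where
  "N_root k s = card {v. root_quad v \<and> QD v = k \<and> Lq v > 0 \<and> fst v = s}"

text \<open>GL(2,Z)-reduced forms [A,B,C] = A T^2 + 2 B T U + C U^2 of discriminant 4B^2-4AC.\<close>
definition gl_reduced_forms :: "int \<Rightarrow> (int \<times> int \<times> int) set" where
  "gl_reduced_forms \<Delta> = {(A,B,C). 4*B^2 - 4*A*C = \<Delta> \<and> 0 \<le> 2*B \<and> 2*B \<le> A \<and> A \<le> C}"

definition h_tilde_pm :: "int \<Rightarrow> nat" where
  "h_tilde_pm \<Delta> = card (gl_reduced_forms \<Delta>)"

end

theory Submission
  imports Defs
begin

text \<open>Completing the square in the form \<open>[w+x, (w+x+y-z)/2, w+y]\<close>, one finds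
  \<open>Q\<^sub>D(w,x,y,z) = \<Delta> + 4w\<^sup>2\<close> for its discriminant \<open>\<Delta>\<close>. Since \<open>Q\<^sub>D \<equiv> L (mod 2)\<close>, the middle
  coefficient is integral when \<open>Q\<^sub>D\<close> is even, and the root inequalities
  \<open>w \<le> x \<le> y \<le> z \<le> w+x+y\<close> translate into \<open>0 \<le> 2B \<le> A \<le> C\<close>. Conversely every
  such form with \<open>w = -n < 0\<close> gives an ordered quadruple on which no \<open>S\<^sub>i\<close> decreases
  the norm. The bijection holds for every discriminant, so the counting statement
  does not need \<open>\<Delta> < 0\<close>.\<close>

definition root_quads :: "int \<Rightarrow> int \<Rightarrow> quad set" where
  "root_quads k s = {v. root_quad v \<and> QD v = k \<and> Lq v > 0 \<and> fst v = s}"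

definition form_of_quad :: "int \<Rightarrow> quad \<Rightarrow> int \<times> int \<times> int" where
  "form_of_quad n = (\<lambda>(w,x,y,z). (-n+x, (-n+x+y-z) div 2, -n+y))"

definition quad_of_form :: "int \<Rightarrow> int \<times> int \<times> int \<Rightarrow> quad" where
  "quad_of_form n = (\<lambda>(A,B,C). (-n, A+n, C+n, A+C+n-2*B))"

lemma QD_eq_discriminant:
  "QD (w,x,y,z) = (w+x+y-z)^2 - 4*(w+x)*(w+y) + 4*w^2"
  unfolding QD_def by (simp add: power2_eq_square algebra_simps)

lemma even_QD_iff_even_Lq: "even (QD v) \<longleftrightarrow> even (Lq v)"
  unfolding QD_def Lq_def by (auto split: prod.splits)

lemma even_middle_coefficient:
  assumes "even (QD (w,x,y,z))"
  shows "even (w+x+y-z)"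
proof -
  have "even (w+x+y+z)"
    using assms by (simp add: even_QD_iff_even_Lq Lq_def)
  moreover have "w+x+y-z = (w+x+y+z) - 2*z" by simp
  ultimately show ?thesis by presburger
qed

lemma form_of_root_quad_reduced:
  assumes "root_quad (w,x,y,z)" and "even (QD (w,x,y,z))"
  shows "form_of_quad (-w) (w,x,y,z) \<in> gl_reduced_forms (QD (w,x,y,z) - 4*w^2)"
proof -
  obtain B where B: "w+x+y-z = 2*B"
    using even_middle_coefficient[OF assms(2)] by blast
  have "w \<le> x" "x \<le> y" "y \<le> z" "z \<le> w+x+y"
    using assms(1) unfolding root_quad_def by auto
  moreover have "4*B^2 - 4*(w+x)*(w+y) = QD (w,x,y,z) - 4*w^2"
    unfolding QD_eq_discriminant B by (simp add: power2_eq_square)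
  ultimately show ?thesis
    using B unfolding form_of_quad_def gl_reduced_forms_def by auto
qed

lemma quad_of_form_inverse: "form_of_quad n (quad_of_form n f) = f"
  unfolding form_of_quad_def quad_of_form_def by (auto split: prod.splits)

lemma form_of_quad_inverse:
  assumes "even (QD (w,x,y,z))"
  shows "quad_of_form (-w) (form_of_quad (-w) (w,x,y,z)) = (w,x,y,z)"
proof -
  obtain B where "w+x+y-z = 2*B"
    using even_middle_coefficient[OF assms] by blast
  then show ?thesis unfolding form_of_quad_def quad_of_form_def by auto
qed

lemma QD_quad_of_form:
  assumes "f \<in> gl_reduced_forms \<Delta>"
  shows "QD (quad_of_form n f) = \<Delta> + 4*n^2"
  using assms unfolding gl_reduced_forms_def quad_of_form_def QD_def
  by (auto simp: power2_eq_square algebra_simps)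

text \<open>All four reflections replace a positive or the negative coordinate by one of
  at least the same absolute value: \<open>S\<^sub>1\<close> gives \<open>2L + 3n\<close>, and \<open>S\<^sub>2, S\<^sub>3, S\<^sub>4\<close> add
  \<open>4(C-B)\<close>, \<open>4(A-B)\<close>, \<open>4B\<close> to the old coordinate.\<close>

lemma reduced_quad_of_form:
  assumes "n > 0" and "(A,B,C) \<in> gl_reduced_forms \<Delta>"
  shows "reduced (quad_of_form n (A,B,C))"
  unfolding reduced_def
proof
  fix i :: nat
  assume "i \<in> {1..4}"
  then have "i = 1 \<or> i = 2 \<or> i = 3 \<or> i = 4" by auto
  then show "\<not> normq (Sq i (quad_of_form n (A,B,C))) < normq (quad_of_form n (A,B,C))"
    using assms unfolding gl_reduced_forms_def quad_of_form_def Sq_def normq_def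
    by (auto simp: abs_if)
qed

lemma root_quad_quad_of_form:
  assumes "n > 0" and "f \<in> gl_reduced_forms \<Delta>"
  shows "root_quad (quad_of_form n f)" and "Lq (quad_of_form n f) > 0"
proof -
  obtain A B C where f: "f = (A,B,C)" by (cases f)
  have "0 \<le> 2*B" "2*B \<le> A" "A \<le> C"
    using assms(2) unfolding f gl_reduced_forms_def by auto
  then show "root_quad (quad_of_form n f)" "Lq (quad_of_form n f) > 0"
    using reduced_quad_of_form[OF assms[unfolded f]] assms(1)
    unfolding f root_quad_def quad_of_form_def Lq_def by auto
qed

theorem bij_betw_root_quads_gl_reduced_forms:
  assumes "n > 0" and "even k"
  shows "bij_betw (form_of_quad n) (root_quads k (-n)) (gl_reduced_forms (k - 4*n^2))"
proof (rule bij_betw_byWitness[where f' = "quad_of_form n"])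
  show "\<forall>v\<in>root_quads k (-n). quad_of_form n (form_of_quad n v) = v"
    using assms(2) form_of_quad_inverse unfolding root_quads_def by fastforce
  show "\<forall>f\<in>gl_reduced_forms (k - 4*n^2). form_of_quad n (quad_of_form n f) = f"
    by (simp add: quad_of_form_inverse)
  show "form_of_quad n ` root_quads k (-n) \<subseteq> gl_reduced_forms (k - 4*n^2)"
    using assms(2) form_of_root_quad_reduced unfolding root_quads_def by fastforce
  show "quad_of_form n ` gl_reduced_forms (k - 4*n^2) \<subseteq> root_quads k (-n)"
    using assms(1) root_quad_quad_of_form QD_quad_of_form
    unfolding root_quads_def by (auto simp: quad_of_form_def split: prod.splits)
qed

theorem theorem4p1:
  fixes m n :: int
  assumes "n > 0"
  shows "(\<forall>v\<in>{v. root_quad v \<and> Lq v > 0 \<and> QD v = 4*m \<and> fst v = -n}.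
            (case v of (w,x,y,z) \<Rightarrow> even (-n+x+y-z)))
       \<and> bij_betw (\<lambda>(w,x,y,z). (-n+x, (-n+x+y-z) div 2, -n+y))
            {v. root_quad v \<and> Lq v > 0 \<and> QD v = 4*m \<and> fst v = -n}
            (gl_reduced_forms (-4*n^2 + 4*m))
       \<and> (-4*n^2 + 4*m < 0 \<longrightarrow> N_root (4*m) (-n) = h_tilde_pm (-4*(n^2 - m)))"
proof -
  have quads: "{v. root_quad v \<and> Lq v > 0 \<and> QD v = 4*m \<and> fst v = -n} = root_quads (4*m) (-n)"
    unfolding root_quads_def by auto
  have "\<forall>v\<in>root_quads (4*m) (-n). case v of (w,x,y,z) \<Rightarrow> even (-n+x+y-z)"
  proof
    fix v assume "v \<in> root_quads (4*m) (-n)"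
    moreover obtain w x y z where v: "v = (w,x,y,z)" by (cases v)
    ultimately have "w = -n" "even (QD (w,x,y,z))" unfolding root_quads_def by auto
    then have "even (-n+x+y-z)" using even_middle_coefficient by blast
    then show "case v of (w,x,y,z) \<Rightarrow> even (-n+x+y-z)" using v by simp
  qed
  moreover have bij: "bij_betw (form_of_quad n) (root_quads (4*m) (-n)) (gl_reduced_forms (-4*n^2 + 4*m))"
    using bij_betw_root_quads_gl_reduced_forms[OF assms, of "4*m"] by (simp add: algebra_simps)
  moreover have "N_root (4*m) (-n) = h_tilde_pm (-4*(n^2 - m))"
    using bij_betw_same_card[OF bij]
    unfolding N_root_def h_tilde_pm_def root_quads_def by (simp add: algebra_simps)
  ultimately show ?thesis
    unfolding quads form_of_quad_def by blast
qed

end
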